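(* Let $G=(V,A,w)$ be a weighted weak equilibrium graph. Then the distance between any two rich leaves of $G$ is at most $2$.
   Context: A weighted directed graph $G=(V,A,w)$ has vertex set $V$, arc set $A$ and weight function $w:V\to\mathbb{Z}^+$ (positive integers). $U(G)$ is the undirected multigraph obtained by ignoring arc directions; $\operatorname{dist}(u,v)$ is the distance in $U(G)$, defined to be $|V|^2$ if $u,v$ are in different components. The cost of a vertex $u$ is $c(u)=\sum_{v\in V}w(v)\operatorname{dist}(u,v)$. $G$ is a weak equilibrium graph if for every arc $\overrightarrow{uv}\in A$ and every vertex $x$ with $\overrightarrow{ux}\notin A$ (and $x\ne u$), replacing the arc $\overrightarrow{uv}$ by $\overrightarrow{ux}$ does not decrease the cost of $u$. A leaf is a vertex of degree $1$ in $U(G)$; a rich leaf is a leaf with outdegree one (i.e. it owns its unique incident arc). *)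

theory Defs
  imports Main
begin

definition weighted_digraph :: "'a set \<Rightarrow> ('a \<times> 'a) set \<Rightarrow> ('a \<Rightarrow> nat) \<Rightarrow> bool" where
  "weighted_digraph V A w \<longleftrightarrow> finite V \<and> A \<subseteq> V \<times> V \<and> (\<forall>u. (u, u) \<notin> A) \<and> (\<forall>v\<in>V. w v > 0)"

definition uadj :: "('a \<times> 'a) set \<Rightarrow> 'a \<Rightarrow> 'a \<Rightarrow> bool" where
  "uadj A u v \<longleftrightarrow> (u, v) \<in> A \<or> (v, u) \<in> A"

definition uwalk :: "('a \<times> 'a) set \<Rightarrow> 'a \<Rightarrow> 'a \<Rightarrow> nat \<Rightarrow> bool" where
  "uwalk A u v n \<longleftrightarrow> (\<exists>p. p 0 = u \<and> p n = v \<and> (\<forall>i<n. uadj A (p i) (p (Suc i))))"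

definition gdist :: "'a set \<Rightarrow> ('a \<times> 'a) set \<Rightarrow> 'a \<Rightarrow> 'a \<Rightarrow> nat" where
  "gdist V A u v = (if \<exists>n. uwalk A u v n then (LEAST n. uwalk A u v n) else card V ^ 2)"

definition cost :: "'a set \<Rightarrow> ('a \<times> 'a) set \<Rightarrow> ('a \<Rightarrow> nat) \<Rightarrow> 'a \<Rightarrow> nat" where
  "cost V A w u = (\<Sum>v\<in>V. w v * gdist V A u v)"

definition weak_equilibrium :: "'a set \<Rightarrow> ('a \<times> 'a) set \<Rightarrow> ('a \<Rightarrow> nat) \<Rightarrow> bool" where
  "weak_equilibrium V A w \<longleftrightarrow>
     (\<forall>u v x. (u, v) \<in> A \<and> x \<in> V \<and> x \<noteq> u \<and> (u, x) \<notin> A \<longrightarrow>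
        cost V A w u \<le> cost V (insert (u, x) (A - {(u, v)})) w u)"

definition outdeg :: "('a \<times> 'a) set \<Rightarrow> 'a \<Rightarrow> nat" where
  "outdeg A u = card {a \<in> A. fst a = u}"

definition indeg :: "('a \<times> 'a) set \<Rightarrow> 'a \<Rightarrow> nat" where
  "indeg A u = card {a \<in> A. snd a = u}"

text \<open>Degree in the multigraph U(G) (arcs uv and vu give two parallel edges).\<close>
definition udeg :: "('a \<times> 'a) set \<Rightarrow> 'a \<Rightarrow> nat" where
  "udeg A u = outdeg A u + indeg A u"

definition is_leaf :: "('a \<times> 'a) set \<Rightarrow> 'a \<Rightarrow> bool" where
  "is_leaf A u \<longleftrightarrow> udeg A u = 1"

definition rich_leaf :: "('a \<times> 'a) set \<Rightarrow> 'a \<Rightarrow> bool" where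
  "rich_leaf A u \<longleftrightarrow> is_leaf A u \<and> outdeg A u = 1"

end

theory Submission
  imports Defs
begin

text \<open>Suppose the rich leaves u and v hang at a and b with a \<noteq> b. If u re-hangs its arc
  at b, it becomes a leaf at the position of v: every vertex other than u, v is at most as far
  from the new u as it was from v (a shortest walk never passes through a leaf), while v is at
  distance 2. Equilibrium for u therefore gives
  w(v) d(u,v) + T(u) \<le> 2 w(v) + T(v), where T(z) is the weighted distance from z to the
  remaining vertices; symmetrically w(u) d(u,v) + T(v) \<le> 2 w(u) + T(u). Adding the two
  inequalities yields d(u,v) \<le> 2.\<close>

lemma uadj_commute: "uadj A x y \<longleftrightarrow> uadj A y x"
  by (auto simp: uadj_def)

lemma uwalk_reverse:
  assumes "uwalk A s t n"
  shows "uwalk A t s n"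
proof -
  obtain p where p: "p 0 = s" "p n = t" "\<forall>i<n. uadj A (p i) (p (Suc i))"
    using assms unfolding uwalk_def by blast
  have "uadj A (p (n - i)) (p (n - Suc i))" if "i < n" for i
  proof -
    have "uadj A (p (n - Suc i)) (p (Suc (n - Suc i)))" using p(3) that by simp
    moreover have "Suc (n - Suc i) = n - i" using that by simp
    ultimately show ?thesis using uadj_commute by metis
  qed
  then show ?thesis
    unfolding uwalk_def using p by (intro exI[of _ "\<lambda>i. p (n - i)"]) auto
qed

lemma gdist_commute: "gdist V A s t = gdist V A t s"
proof -
  have walks: "uwalk A s t = uwalk A t s" by (auto intro: uwalk_reverse)
  show ?thesis unfolding gdist_def walks ..
qed

lemma gdist_le_walk: "uwalk A s t n \<Longrightarrow> gdist V A s t \<le> n"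
  unfolding gdist_def by (auto intro: Least_le)

lemma gdist_self: "gdist V A s s = 0"
proof -
  have "uwalk A s s 0" unfolding uwalk_def by (intro exI[of _ "\<lambda>_. s"]) simp
  then show ?thesis using gdist_le_walk by fastforce
qed

lemma gdist_le_2:
  assumes "uadj A s m" "uadj A m t"
  shows "gdist V A s t \<le> 2"
proof -
  define p where "p i = (if i = 0 then s else if i = 1 then m else t)" for i :: nat
  have "\<forall>i<2. uadj A (p i) (p (Suc i))"
    using assms by (auto simp: p_def less_2_cases_iff)
  then have "uwalk A s t 2" unfolding uwalk_def by (intro exI[of _ p]) (simp add: p_def)
  then show ?thesis by (rule gdist_le_walk)
qed

lemma uwalk_skip_backtrack:
  assumes p: "p 0 = s" "p n = t" "\<forall>i<n. uadj A (p i) (p (Suc i))"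
    and j: "j + 2 \<le> n" "p j = p (j + 2)"
  shows "uwalk A s t (n - 2)"
proof -
  define q where "q k = (if k \<le> j then p k else p (k + 2))" for k
  have "q 0 = s" using p by (simp add: q_def)
  moreover have "q (n - 2) = t"
  proof (cases "n = j + 2")
    case True
    then show ?thesis using p j by (simp add: q_def)
  next
    case False
    then have "\<not> n - 2 \<le> j" "n - 2 + 2 = n" using j by auto
    then show ?thesis using p by (simp add: q_def)
  qed
  moreover have "uadj A (q k) (q (Suc k))" if "k < n - 2" for k
  proof -
    have "uadj A (p (k + 2)) (p (Suc (k + 2)))" using p(3) that by simp
    then show ?thesis using p(3) that j by (cases k j rule: linorder_cases) (auto simp: q_def)
  qed
  ultimately show ?thesis unfolding uwalk_def by blast
qed

text \<open>Entering and leaving a leaf c both pass through its neighbour, so the walk could be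
  shortened by two.\<close>
lemma shortest_uwalk_avoids_leaf:
  assumes p: "p 0 = s" "p n = t" "\<forall>i<n. uadj A (p i) (p (Suc i))"
    and shortest: "\<forall>m<n. \<not> uwalk A s t m"
    and leaf: "\<And>y. uadj A c y \<Longrightarrow> y = a"
    and i: "0 < i" "i < n"
  shows "p i \<noteq> c"
proof
  assume pi: "p i = c"
  have "uadj A (p (i - 1)) (p (Suc (i - 1)))" using p(3) i by (metis less_imp_diff_less)
  then have "uadj A c (p (i - 1))" using pi i by (simp add: uadj_commute)
  then have "p (i - 1) = a" by (rule leaf)
  moreover have "uadj A (p i) (p (Suc i))" using p(3) i by simp
  then have "uadj A c (p (Suc i))" using pi by simp
  then have "p (Suc i) = a" by (rule leaf)
  ultimately have "uwalk A s t (n - 2)"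
    using i by (intro uwalk_skip_backtrack[OF p, of "i - 1"]) simp_all
  then show False using shortest i by simp
qed

lemma cost_split:
  assumes "finite V" "u \<in> V" "v \<in> V" "u \<noteq> v"
  shows "cost V A w u = w v * gdist V A u v + (\<Sum>x\<in>V - {u, v}. w x * gdist V A u x)"
proof -
  have "cost V A w u = (\<Sum>x\<in>insert u (insert v (V - {u, v})). w x * gdist V A u x)"
    unfolding cost_def using assms by (intro sum.cong) auto
  also have "\<dots> = w v * gdist V A u v + (\<Sum>x\<in>V - {u, v}. w x * gdist V A u x)"
    using assms by (simp add: gdist_self)
  finally show ?thesis .
qed

lemma rich_leafE:
  assumes "finite A" "rich_leaf A u"
  obtains a where "(u, a) \<in> A" "\<And>y. (y, u) \<notin> A" "\<And>y. uadj A u y \<longleftrightarrow> y = a"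
proof -
  have out: "card {e \<in> A. fst e = u} = 1" and "card {e \<in> A. snd e = u} = 0"
    using assms(2) unfolding rich_leaf_def is_leaf_def udeg_def outdeg_def indeg_def by linarith+
  then have no_in: "(y, u) \<notin> A" for y
    using assms(1) by (auto simp: card_eq_0_iff)
  obtain e where e: "{e \<in> A. fst e = u} = {e}" using card_1_singletonE[OF out] by blast
  moreover have "fst e = u" using e by blast
  then obtain a where "e = (u, a)" by (metis prod.collapse)
  ultimately have "{x \<in> A. fst x = u} = {(u, a)}" by simp
  then have "(u, y) \<in> {x \<in> A. fst x = u} \<longleftrightarrow> (u, y) \<in> {(u, a)}" for y
    by (rule eqset_imp_iff)
  then have arcs: "(u, y) \<in> A \<longleftrightarrow> y = a" for y by simp
  show ?thesis using no_in arcs by (intro that) (auto simp: uadj_def)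
qed

definition rehang :: "('a \<times> 'a) set \<Rightarrow> 'a \<Rightarrow> 'a \<Rightarrow> 'a \<Rightarrow> ('a \<times> 'a) set" where
  "rehang A u a b = insert (u, b) (A - {(u, a)})"

locale leaf_pair =
  fixes A :: "('a \<times> 'a) set" and u a v b :: 'a
  assumes u_nbr: "\<And>y. uadj A u y \<longleftrightarrow> y = a"
    and u_owns: "(a, u) \<notin> A"
    and v_nbr: "\<And>y. uadj A v y \<longleftrightarrow> y = b"
    and u_neq_v: "u \<noteq> v"
    and b_neq_u: "b \<noteq> u"
begin

abbreviation "A' \<equiv> rehang A u a b"

lemma rehang_nbr: "uadj A' u y \<longleftrightarrow> y = b"
proof -
  have "(u, y) \<in> A \<Longrightarrow> y = a" "(y, u) \<in> A \<Longrightarrow> y = a"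
    using u_nbr[of y] by (auto simp: uadj_def)
  then show ?thesis using u_owns b_neq_u by (auto simp: rehang_def uadj_def)
qed

lemma rehang_uadj_off_u:
  assumes "x \<noteq> u" "y \<noteq> u"
  shows "uadj A' x y \<longleftrightarrow> uadj A x y"
  using assms by (auto simp: rehang_def uadj_def)

lemma uwalk_rehang_imp_uwalk:
  assumes "uwalk A' u x n" "x \<noteq> u"
  shows "uwalk A v x n"
proof -
  obtain p where p: "p 0 = u" "p n = x" "\<forall>i<n. uadj A' (p i) (p (Suc i))"
    using assms(1) unfolding uwalk_def by blast
  define q where "q i = (if p i = u then v else p i)" for i
  have "uadj A (q i) (q (Suc i))" if "i < n" for i
  proof -
    have e: "uadj A' (p i) (p (Suc i))" using p(3) that by blast
    consider "p i = u" | "p (Suc i) = u" | "p i \<noteq> u" "p (Suc i) \<noteq> u" by blast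
    then show ?thesis
    proof cases
      case 1
      then show ?thesis using e rehang_nbr v_nbr b_neq_u by (simp add: q_def)
    next
      case 2
      then show ?thesis using e rehang_nbr v_nbr b_neq_u uadj_commute by (metis q_def)
    next
      case 3
      then show ?thesis using e rehang_uadj_off_u by (simp add: q_def)
    qed
  qed
  moreover have "q 0 = v" "q n = x" using p assms(2) by (auto simp: q_def)
  ultimately show ?thesis unfolding uwalk_def by blast
qed

lemma shortest_uwalk_imp_uwalk_rehang:
  assumes walk: "uwalk A v x n" and shortest: "\<forall>m<n. \<not> uwalk A v x m"
    and "x \<noteq> u" "x \<noteq> v"
  shows "uwalk A' u x n"
proof -
  obtain p where p: "p 0 = v" "p n = x" "\<forall>i<n. uadj A (p i) (p (Suc i))"
    using walk unfolding uwalk_def by blast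
  have avoid: "p i \<noteq> u" if "i \<le> n" for i
    using shortest_uwalk_avoids_leaf[OF p shortest, of u a i] u_nbr that p assms(3) u_neq_v
    by (cases "i = 0 \<or> i = n") auto
  define q where "q i = (if i = 0 then u else p i)" for i
  have "uadj A' (q i) (q (Suc i))" if "i < n" for i
  proof (cases "i = 0")
    case True
    have "uadj A (p 0) (p (Suc 0))" using p(3) that by blast
    then have "p 1 = b" using p(1) v_nbr by simp
    then show ?thesis using True rehang_nbr by (simp add: q_def)
  next
    case False
    then show ?thesis using p(3) avoid that rehang_uadj_off_u by (simp add: q_def)
  qed
  moreover have "q 0 = u" "q n = x" using p assms(4) by (auto simp: q_def)
  ultimately show ?thesis unfolding uwalk_def by blast
qed

lemma gdist_rehang_le:
  assumes "x \<noteq> u" "x \<noteq> v"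
  shows "gdist V A' u x \<le> gdist V A v x"
proof (cases "\<exists>n. uwalk A v x n")
  case True
  define n where "n = (LEAST n. uwalk A v x n)"
  have "uwalk A v x n" "\<forall>m<n. \<not> uwalk A v x m"
    using True LeastI_ex not_less_Least unfolding n_def by metis+
  then have "gdist V A' u x \<le> n"
    using assms by (intro gdist_le_walk shortest_uwalk_imp_uwalk_rehang)
  then show ?thesis using True by (simp add: gdist_def n_def)
next
  case False
  then have "\<not> (\<exists>n. uwalk A' u x n)" using uwalk_rehang_imp_uwalk assms by blast
  then show ?thesis using False by (simp add: gdist_def)
qed

lemma cost_rehang_le:
  assumes "finite V" "u \<in> V" "v \<in> V"
  shows "cost V A' w u \<le> w v * 2 + (\<Sum>x\<in>V - {u, v}. w x * gdist V A v x)"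
proof -
  have "uadj A' b v"
    using v_nbr[of b] b_neq_u u_neq_v by (auto simp: rehang_def uadj_def)
  then have "gdist V A' u v \<le> 2" using rehang_nbr by (intro gdist_le_2[of _ _ b]) auto
  then have "w v * gdist V A' u v \<le> w v * 2" by simp
  moreover have "(\<Sum>x\<in>V - {u, v}. w x * gdist V A' u x) \<le> (\<Sum>x\<in>V - {u, v}. w x * gdist V A v x)"
    by (intro sum_mono mult_le_mono2 gdist_rehang_le) auto
  ultimately show ?thesis using cost_split[OF assms u_neq_v, of A' w] by linarith
qed

end

lemma weak_equilibrium_rehang:
  assumes "weak_equilibrium V A w" "(u, a) \<in> A" "b \<in> V" "b \<noteq> u" "(u, b) \<notin> A"
  shows "cost V A w u \<le> cost V (rehang A u a b) w u"
  using assms unfolding weak_equilibrium_def rehang_def by blast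

lemma gdist_le_2_if_rehangs_not_better:
  assumes "leaf_pair A u a v b" "leaf_pair A v b u a"
    and fin: "finite V" and "u \<in> V" "v \<in> V" "w u > 0"
    and eq_u: "cost V A w u \<le> cost V (rehang A u a b) w u"
    and eq_v: "cost V A w v \<le> cost V (rehang A v b a) w v"
  shows "gdist V A u v \<le> 2"
proof -
  interpret uv: leaf_pair A u a v b by fact
  interpret vu: leaf_pair A v b u a by fact
  have dist_sym: "gdist V A v u = gdist V A u v" by (rule gdist_commute)
  have "(w v + w u) * gdist V A u v \<le> (w v + w u) * 2"
    using eq_u eq_v cost_split[OF fin assms(4,5) uv.u_neq_v, of A w]
      cost_split[OF fin assms(5,4) vu.u_neq_v, of A w]
      uv.cost_rehang_le[OF fin assms(4,5), of w] vu.cost_rehang_le[OF fin assms(5,4), of w]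
    unfolding dist_sym insert_commute[of v u] add_mult_distrib by linarith
  then show ?thesis using \<open>w u > 0\<close> by (simp only: mult_le_cancel1)
qed

theorem mainTheorem20:
  fixes V :: "'a set" and A :: "('a \<times> 'a) set" and w :: "'a \<Rightarrow> nat"
  assumes "weighted_digraph V A w"
    and "weak_equilibrium V A w"
    and "u \<in> V" and "v \<in> V"
    and "rich_leaf A u" and "rich_leaf A v"
  shows "gdist V A u v \<le> 2"
proof -
  have fin: "finite V" and AV: "A \<subseteq> V \<times> V" and "w u > 0"
    using assms(1,3) unfolding weighted_digraph_def by auto
  have "finite A" using finite_subset[OF AV] fin by simp
  then obtain a b where ua: "(u, a) \<in> A" "\<And>y. (y, u) \<notin> A" "\<And>y. uadj A u y \<longleftrightarrow> y = a"
    and vb: "(v, b) \<in> A" "\<And>y. (y, v) \<notin> A" "\<And>y. uadj A v y \<longleftrightarrow> y = b"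
    using rich_leafE assms(5,6) by metis
  consider "u = v" | "a = b" | "u \<noteq> v" "a \<noteq> b" by blast
  then show ?thesis
  proof cases
    case 1
    then show ?thesis by (simp add: gdist_self)
  next
    case 2
    then show ?thesis using ua(1) vb(1) by (intro gdist_le_2[of _ _ a]) (auto simp: uadj_def)
  next
    case 3
    have "a \<in> V" "b \<in> V" "a \<noteq> v" "b \<noteq> u"
      using ua(1,2) vb(1,2) AV by auto
    moreover have "(u, b) \<notin> A" "(v, a) \<notin> A"
      using ua(3)[of b] vb(3)[of a] 3 by (auto simp: uadj_def)
    moreover have "leaf_pair A u a v b" "leaf_pair A v b u a"
      using ua(2,3) vb(2,3) 3 calculation by (auto intro!: leaf_pair.intro)
    ultimately show ?thesis
      using gdist_le_2_if_rehangs_not_better fin assms(3,4) \<open>w u > 0\<close>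
        weak_equilibrium_rehang[OF assms(2)] ua(1) vb(1) by metis
  qed
qed

end
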